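(* Let $X\neq\emptyset$ be a set and $\Phi$ a nonempty set of bounded functions $X\to\mathbb{R}$ that is compact with respect to $D_\Phi$. If the pseudo-metric space $(X,D_X)$ is complete, then $(X,D_X)$ is compact.
   Context: $D_\Phi(\varphi_1,\varphi_2):=\|\varphi_1-\varphi_2\|_\infty=\sup_{x\in X}|\varphi_1(x)-\varphi_2(x)|$. $D_X(x_1,x_2):=\sup_{\varphi\in\Phi}|\varphi(x_1)-\varphi(x_2)|$ (a pseudo-metric on $X$, finite since $\Phi$ is bounded); $X$ carries the topology induced by $D_X$. *)

theory Defs
  imports "HOL-Analysis.Analysis"
begin

definition DX :: "('a \<Rightarrow> real) set \<Rightarrow> 'a \<Rightarrow> 'a \<Rightarrow> real" where
  "DX \<Phi> x1 x2 = (SUP \<phi>\<in>\<Phi>. \<bar>\<phi> x1 - \<phi> x2\<bar>)"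

definition DPhi :: "'a set \<Rightarrow> ('a \<Rightarrow> real) \<Rightarrow> ('a \<Rightarrow> real) \<Rightarrow> real" where
  "DPhi X \<phi>1 \<phi>2 = (SUP x\<in>X. \<bar>\<phi>1 x - \<phi>2 x\<bar>)"

definition pm_open :: "'a set \<Rightarrow> ('a \<Rightarrow> 'a \<Rightarrow> real) \<Rightarrow> 'a set \<Rightarrow> bool" where
  "pm_open S d U \<longleftrightarrow> U \<subseteq> S \<and> (\<forall>x\<in>U. \<exists>e>0. \<forall>y\<in>S. d x y < e \<longrightarrow> y \<in> U)"

lemma istopology_pm_open: "istopology (pm_open S d)"
  unfolding istopology_def
proof (intro conjI allI impI)
  fix U V assume A1: "pm_open S d U" and A2: "pm_open S d V"
  note A = A1 A2
  show "pm_open S d (U \<inter> V)"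
    unfolding pm_open_def
  proof (intro conjI ballI)
    show "U \<inter> V \<subseteq> S" using A unfolding pm_open_def by blast
    fix x assume x: "x \<in> U \<inter> V"
    obtain e1 where "e1 > 0" "\<forall>y\<in>S. d x y < e1 \<longrightarrow> y \<in> U"
      using A x unfolding pm_open_def by blast
    moreover obtain e2 where "e2 > 0" "\<forall>y\<in>S. d x y < e2 \<longrightarrow> y \<in> V"
      using A x unfolding pm_open_def by blast
    ultimately show "\<exists>e>0. \<forall>y\<in>S. d x y < e \<longrightarrow> y \<in> U \<inter> V"
      by (intro exI[of _ "min e1 e2"]) auto
  qed
next
  fix K assume "\<forall>U\<in>K. pm_open S d U"
  then show "pm_open S d (\<Union> K)"
    unfolding pm_open_def by (meson Sup_le_iff UnionE UnionI)
qed

definition pm_topology :: "'a set \<Rightarrow> ('a \<Rightarrow> 'a \<Rightarrow> real) \<Rightarrow> 'a topology" where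
  "pm_topology S d = topology (pm_open S d)"

lemma openin_pm_topology: "openin (pm_topology S d) U \<longleftrightarrow> pm_open S d U"
  by (simp add: pm_topology_def istopology_pm_open)

definition pm_complete :: "'a set \<Rightarrow> ('a \<Rightarrow> 'a \<Rightarrow> real) \<Rightarrow> bool" where
  "pm_complete S d \<longleftrightarrow>
     (\<forall>\<sigma>::nat \<Rightarrow> 'a. range \<sigma> \<subseteq> S \<and>
        (\<forall>e>0. \<exists>N. \<forall>m n. N \<le> m \<longrightarrow> N \<le> n \<longrightarrow> d (\<sigma> m) (\<sigma> n) < e)
        \<longrightarrow> (\<exists>x\<in>S. \<forall>e>0. \<exists>N. \<forall>n\<ge>N. d (\<sigma> n) x < e))"

end

theory Submission
  imports Defs
begin

text \<open>Compactness of \<open>\<Phi>\<close> for the sup-distance yields, for every \<open>e\<close>, a finite \<open>e/4\<close>-net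
  \<open>K \<subseteq> \<Phi>\<close>. Rounding the finitely many functions of \<open>K\<close> to a grid of mesh \<open>e/4\<close> sorts the points of \<open>X\<close>
  into finitely many classes on which every \<open>k \<in> K\<close> varies by less than \<open>e/4\<close>, so one point
  per class is an \<open>e\<close>-net of \<open>X\<close> for \<open>D_X\<close>. Thus \<open>(X, D_X)\<close> is complete and totally bounded,
  hence compact: its metric quotient is compact, and the topology of \<open>X\<close> is pulled back from it.\<close>

lemma compact_space_pullback_topology:
  assumes fA: "f ` A = topspace T" and "compact_space T"
  shows "compact_space (pullback_topology A f T)"
  unfolding compact_space_alt
proof (intro allI impI)
  fix \<U> assume \<U>: "(\<forall>U\<in>\<U>. openin (pullback_topology A f T) U) \<and> topspace (pullback_topology A f T) \<subseteq> \<Union>\<U>"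
  have top: "topspace (pullback_topology A f T) = A"
    using fA by (auto simp: topspace_pullback_topology)
  have "\<forall>U\<in>\<U>. \<exists>V. openin T V \<and> f -` V \<inter> A = U"
    using \<U> unfolding openin_pullback_topology by metis
  then obtain V where V: "\<And>U. U \<in> \<U> \<Longrightarrow> openin T (V U)" "\<And>U. U \<in> \<U> \<Longrightarrow> f -` V U \<inter> A = U"
    by metis
  have "topspace T \<subseteq> \<Union>(V ` \<U>)"
  proof
    fix t assume "t \<in> topspace T"
    then obtain a where a: "a \<in> A" "t = f a"
      using fA by blast
    then obtain U where "U \<in> \<U>" "a \<in> U"
      using \<U> top by blast
    then show "t \<in> \<Union>(V ` \<U>)"
      using V(2) a by blast
  qed
  then obtain \<G> where "finite \<G>" "\<G> \<subseteq> V ` \<U>" "topspace T \<subseteq> \<Union>\<G>"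
    using assms(2)[unfolded compact_space_alt, rule_format, of "V ` \<U>"] V(1) by blast
  then obtain \<F> where \<F>: "finite \<F>" "\<F> \<subseteq> \<U>" "topspace T \<subseteq> \<Union>(V ` \<F>)"
    by (metis finite_subset_image)
  have "A \<subseteq> \<Union>\<F>"
  proof
    fix a assume a: "a \<in> A"
    then obtain U where "U \<in> \<F>" "f a \<in> V U"
      using \<F>(3) fA by blast
    moreover have "f -` V U \<inter> A = U"
      using V(2) \<F>(2) \<open>U \<in> \<F>\<close> by blast
    ultimately have "a \<in> U"
      using a by blast
    with \<open>U \<in> \<F>\<close> show "a \<in> \<Union>\<F>" ..
  qed
  with \<F> top show "\<exists>\<F>. finite \<F> \<and> \<F> \<subseteq> \<U> \<and> topspace (pullback_topology A f T) \<subseteq> \<Union>\<F>"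
    by (intro exI[of _ \<F>]) simp
qed

lemma topspace_pm_topology [simp]: "topspace (pm_topology S d) = S"
proof -
  have "pm_open S d S" unfolding pm_open_def by (auto intro: exI[of _ 1])
  then show ?thesis
    unfolding topspace_def openin_pm_topology pm_open_def by blast
qed

definition pm_totally_bounded :: "'a set \<Rightarrow> ('a \<Rightarrow> 'a \<Rightarrow> real) \<Rightarrow> bool" where
  "pm_totally_bounded S d \<longleftrightarrow>
     (\<forall>e>0. \<exists>K. finite K \<and> K \<subseteq> S \<and> (\<forall>y\<in>S. \<exists>k\<in>K. d k y < e))"

lemma pm_totally_boundedE:
  assumes "pm_totally_bounded S d" and "e > 0"
  obtains K where "finite K" "K \<subseteq> S" "\<forall>y\<in>S. \<exists>k\<in>K. d k y < e"
  using assms(1)[unfolded pm_totally_bounded_def, rule_format, OF assms(2)] that by auto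

locale Pseudometric_space =
  fixes S :: "'a set" and d :: "'a \<Rightarrow> 'a \<Rightarrow> real"
  assumes refl: "x \<in> S \<Longrightarrow> d x x = 0"
    and commute: "x \<in> S \<Longrightarrow> y \<in> S \<Longrightarrow> d x y = d y x"
    and triangle: "x \<in> S \<Longrightarrow> y \<in> S \<Longrightarrow> z \<in> S \<Longrightarrow> d x z \<le> d x y + d y z"
begin

lemma nonneg: "x \<in> S \<Longrightarrow> y \<in> S \<Longrightarrow> 0 \<le> d x y"
  using triangle[of x y x] refl[of x] commute[of x y] by simp

lemma pm_totally_bounded_if_compact_space:
  assumes "compact_space (pm_topology S d)"
  shows "pm_totally_bounded S d"
  unfolding pm_totally_bounded_def
proof (intro allI impI)
  fix e :: real assume "e > 0"
  define B where "B k = {y\<in>S. d k y < e}" for k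
  have op: "openin (pm_topology S d) (B k)" if "k \<in> S" for k
    unfolding openin_pm_topology pm_open_def
  proof (intro conjI ballI)
    fix y assume y: "y \<in> B k"
    show "\<exists>r>0. \<forall>z\<in>S. d y z < r \<longrightarrow> z \<in> B k"
    proof (intro exI[of _ "e - d k y"] conjI ballI impI)
      fix z assume "z \<in> S" "d y z < e - d k y"
      with y that triangle[of k y z] show "z \<in> B k" by (auto simp: B_def)
    qed (use y in \<open>auto simp: B_def\<close>)
  qed (auto simp: B_def)
  have cov: "topspace (pm_topology S d) \<subseteq> \<Union>(B ` S)"
    using refl \<open>e > 0\<close> by (auto simp: B_def)
  obtain \<F> where "finite \<F>" "\<F> \<subseteq> B ` S" "S \<subseteq> \<Union>\<F>"
    using assms[unfolded compact_space_alt, rule_format, of "B ` S"] op cov by auto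
  then obtain K where K: "finite K" "K \<subseteq> S" "S \<subseteq> \<Union>(B ` K)"
    by (metis finite_subset_image)
  have "\<exists>k\<in>K. d k y < e" if "y \<in> S" for y
  proof -
    obtain k where "k \<in> K" "y \<in> B k"
      using K(3) \<open>y \<in> S\<close> by blast
    then show ?thesis
      unfolding B_def by blast
  qed
  with K show "\<exists>K. finite K \<and> K \<subseteq> S \<and> (\<forall>y\<in>S. \<exists>k\<in>K. d k y < e)"
    by blast
qed

definition pm_class :: "'a \<Rightarrow> 'a set" where
  "pm_class x = {y\<in>S. d x y = 0}"

text \<open>The junk value \<open>0\<close> off the quotient is needed because \<open>Metric_space\<close> demands
  nonnegativity and symmetry of the distance everywhere.\<close>

definition quotient_dist :: "'a set \<Rightarrow> 'a set \<Rightarrow> real" where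
  "quotient_dist A B = (if A \<in> pm_class ` S \<and> B \<in> pm_class ` S then d (SOME a. a \<in> A) (SOME b. b \<in> B) else 0)"

lemma dist_eq_if_zero_dist:
  assumes "x \<in> S" "y \<in> S" "a \<in> S" "b \<in> S" "d x a = 0" "d y b = 0"
  shows "d a b = d x y"
proof -
  have "d a b \<le> d a x + d x b" "d x b \<le> d x y + d y b"
    "d x y \<le> d x a + d a y" "d a y \<le> d a b + d b y"
    using assms triangle by blast+
  moreover have "d a x = 0" "d b y = 0"
    using assms commute by auto
  ultimately show ?thesis
    using assms by linarith
qed

lemma some_in_pm_class:
  assumes "x \<in> S"
  shows "(SOME a. a \<in> pm_class x) \<in> pm_class x"
proof -
  have "x \<in> pm_class x"
    using assms refl by (simp add: pm_class_def)
  then show ?thesis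
    by (rule someI)
qed

lemma some_in_carrier: "A \<in> pm_class ` S \<Longrightarrow> (SOME a. a \<in> A) \<in> S"
  using some_in_pm_class unfolding pm_class_def by blast

lemma quotient_dist_pm_class [simp]:
  assumes "x \<in> S" "y \<in> S"
  shows "quotient_dist (pm_class x) (pm_class y) = d x y"
proof -
  let ?a = "SOME a. a \<in> pm_class x" and ?b = "SOME b. b \<in> pm_class y"
  have "?a \<in> S" "d x ?a = 0" "?b \<in> S" "d y ?b = 0"
    using some_in_pm_class assms unfolding pm_class_def by auto
  then have "d ?a ?b = d x y"
    using assms dist_eq_if_zero_dist by blast
  moreover have "pm_class x \<in> pm_class ` S" "pm_class y \<in> pm_class ` S"
    using assms by auto
  ultimately show ?thesis
    by (simp add: quotient_dist_def)
qed

lemma pm_class_eq_iff: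
  assumes "x \<in> S" "y \<in> S"
  shows "pm_class x = pm_class y \<longleftrightarrow> d x y = 0"
proof
  assume "pm_class x = pm_class y"
  moreover have "y \<in> pm_class y"
    using assms refl by (simp add: pm_class_def)
  ultimately have "y \<in> pm_class x"
    by simp
  then show "d x y = 0"
    by (simp add: pm_class_def)
next
  assume "d x y = 0"
  then have "d y z = d x z" if "z \<in> S" for z
    using dist_eq_if_zero_dist[of x z y z] assms that refl by simp
  then show "pm_class x = pm_class y"
    unfolding pm_class_def by auto
qed

sublocale quotient: Metric_space "pm_class ` S" quotient_dist
proof
  fix A B C
  show "0 \<le> quotient_dist A B"
    by (simp add: quotient_dist_def nonneg some_in_carrier)
  show "quotient_dist A B = quotient_dist B A"
    by (simp add: quotient_dist_def commute some_in_carrier)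
  show "quotient_dist A B = 0 \<longleftrightarrow> A = B" if AB: "A \<in> pm_class ` S" "B \<in> pm_class ` S"
  proof -
    obtain x y where "x \<in> S" "y \<in> S" "A = pm_class x" "B = pm_class y"
      using AB by blast
    then show ?thesis
      by (simp add: pm_class_eq_iff)
  qed
  show "quotient_dist A C \<le> quotient_dist A B + quotient_dist B C"
    if ABC: "A \<in> pm_class ` S" "B \<in> pm_class ` S" "C \<in> pm_class ` S"
  proof -
    obtain x y z where "x \<in> S" "y \<in> S" "z \<in> S" "A = pm_class x" "B = pm_class y" "C = pm_class z"
      using ABC by blast
    then show ?thesis
      using triangle[of x y z] by simp
  qed
qed

lemma pm_topology_eq_pullback_quotient:
  "pm_topology S d = pullback_topology S pm_class quotient.mtopology"
proof (rule topology_eq[THEN iffD2], intro allI iffI)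
  fix U
  assume "openin (pm_topology S d) U"
  then have U: "U \<subseteq> S" "\<And>x. x \<in> U \<Longrightarrow> \<exists>e>0. \<forall>y\<in>S. d x y < e \<longrightarrow> y \<in> U"
    unfolding openin_pm_topology pm_open_def by auto
  have saturated: "y \<in> U" if "x \<in> U" "y \<in> S" "pm_class y = pm_class x" for x y
  proof -
    obtain e where "e > 0" "\<forall>y\<in>S. d x y < e \<longrightarrow> y \<in> U"
      using U(2) \<open>x \<in> U\<close> by blast
    moreover have "d x y = 0"
      using that U(1) pm_class_eq_iff commute by auto
    ultimately show ?thesis
      using \<open>y \<in> S\<close> by auto
  qed
  have "openin quotient.mtopology (pm_class ` U)"
    unfolding quotient.openin_mtopology
  proof (intro conjI allI impI)
    show "pm_class ` U \<subseteq> pm_class ` S"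
      using U(1) by blast
    fix A assume "A \<in> pm_class ` U"
    then obtain x where x: "x \<in> U" "A = pm_class x"
      by blast
    obtain e where e: "e > 0" "\<forall>y\<in>S. d x y < e \<longrightarrow> y \<in> U"
      using U(2) x(1) by blast
    have "quotient.mball A e \<subseteq> pm_class ` U"
    proof
      fix B assume "B \<in> quotient.mball A e"
      then obtain y where "y \<in> S" "B = pm_class y" "quotient_dist A B < e"
        by auto
      then show "B \<in> pm_class ` U"
        using e x U(1) by auto
    qed
    with e show "\<exists>r>0. quotient.mball A r \<subseteq> pm_class ` U"
      by blast
  qed
  moreover have "U = pm_class -` (pm_class ` U) \<inter> S"
    using U(1) saturated by auto
  ultimately show "openin (pullback_topology S pm_class quotient.mtopology) U"
    unfolding openin_pullback_topology by blast
next
  fix U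
  assume "openin (pullback_topology S pm_class quotient.mtopology) U"
  then obtain V where V: "openin quotient.mtopology V" "U = pm_class -` V \<inter> S"
    unfolding openin_pullback_topology by blast
  show "openin (pm_topology S d) U"
    unfolding openin_pm_topology pm_open_def
  proof (intro conjI ballI)
    show "U \<subseteq> S"
      using V(2) by blast
    fix x assume x: "x \<in> U"
    then obtain r where r: "r > 0" "quotient.mball (pm_class x) r \<subseteq> V"
      using V quotient.openin_mtopology by blast
    have "y \<in> U" if "y \<in> S" "d x y < r" for y
    proof -
      have "pm_class y \<in> quotient.mball (pm_class x) r"
        using that x V(2) by auto
      then show ?thesis
        using r V(2) that(1) by blast
    qed
    with r show "\<exists>e>0. \<forall>y\<in>S. d x y < e \<longrightarrow> y \<in> U"
      by blast
  qed
qed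

lemma mcomplete_quotient:
  assumes "pm_complete S d"
  shows "quotient.mcomplete"
  unfolding quotient.mcomplete_def
proof (intro allI impI)
  fix \<sigma> assume \<sigma>: "quotient.MCauchy \<sigma>"
  define \<tau> where "\<tau> n = inv_into S pm_class (\<sigma> n)" for n
  have \<tau>: "\<tau> n \<in> S" "pm_class (\<tau> n) = \<sigma> n" for n
  proof -
    have "\<sigma> n \<in> pm_class ` S"
      using \<sigma> unfolding quotient.MCauchy_def by blast
    then show "\<tau> n \<in> S" "pm_class (\<tau> n) = \<sigma> n"
      unfolding \<tau>_def by (rule inv_into_into, rule f_inv_into_f)
  qed
  have dist_\<tau>: "d (\<tau> m) (\<tau> n) = quotient_dist (\<sigma> m) (\<sigma> n)" for m n
    using \<tau> by (metis quotient_dist_pm_class)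
  have "\<forall>e>0. \<exists>N. \<forall>m n. N \<le> m \<longrightarrow> N \<le> n \<longrightarrow> d (\<tau> m) (\<tau> n) < e"
    using \<sigma> unfolding dist_\<tau> quotient.MCauchy_def by blast
  then obtain x where x: "x \<in> S" "\<forall>e>0. \<exists>N. \<forall>n\<ge>N. d (\<tau> n) x < e"
    using assms \<tau>(1) unfolding pm_complete_def by blast
  have "quotient_dist (\<sigma> n) (pm_class x) = d (\<tau> n) x" for n
    using \<tau> x(1) by (metis quotient_dist_pm_class)
  moreover have "\<sigma> n \<in> pm_class ` S" for n
    using \<tau> by (metis imageI)
  ultimately have "limitin quotient.mtopology \<sigma> (pm_class x) sequentially"
    unfolding quotient.limitin_metric eventually_sequentially
    using x by auto
  then show "\<exists>l. limitin quotient.mtopology \<sigma> l sequentially"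
    by blast
qed

lemma mtotally_bounded_quotient:
  assumes "pm_totally_bounded S d"
  shows "quotient.mtotally_bounded (pm_class ` S)"
  unfolding quotient.mtotally_bounded_def
proof (intro allI impI)
  fix e :: real assume "e > 0"
  with assms obtain K where K: "finite K" "K \<subseteq> S" "\<forall>y\<in>S. \<exists>k\<in>K. d k y < e"
    by (rule pm_totally_boundedE)
  have "pm_class ` S \<subseteq> (\<Union>A\<in>pm_class ` K. quotient.mball A e)"
  proof
    fix A assume "A \<in> pm_class ` S"
    then obtain y where "y \<in> S" "A = pm_class y"
      by blast
    moreover obtain k where "k \<in> K" "d k y < e"
      using K(3) \<open>y \<in> S\<close> by blast
    moreover have "k \<in> S"
      using K(2) \<open>k \<in> K\<close> by blast
    ultimately have "A \<in> quotient.mball (pm_class k) e"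
      by simp
    with \<open>k \<in> K\<close> show "A \<in> (\<Union>A\<in>pm_class ` K. quotient.mball A e)"
      by blast
  qed
  with K show "\<exists>F. finite F \<and> F \<subseteq> pm_class ` S \<and> pm_class ` S \<subseteq> (\<Union>A\<in>F. quotient.mball A e)"
    by (intro exI[of _ "pm_class ` K"]) auto
qed

lemma compact_space_if_complete_totally_bounded:
  assumes "pm_complete S d" and "pm_totally_bounded S d"
  shows "compact_space (pm_topology S d)"
proof -
  have "compact_space quotient.mtopology"
    using assms mcomplete_quotient mtotally_bounded_quotient
    by (simp add: quotient.compact_space_eq_mcomplete_mtotally_bounded)
  then show ?thesis
    unfolding pm_topology_eq_pullback_quotient
    by (intro compact_space_pullback_topology) simp
qed

end

lemma abs_diff_le_SUP_abs_diff:
  fixes g :: "'i \<Rightarrow> 'a \<Rightarrow> real"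
  assumes "i \<in> I" and "bounded ((\<lambda>j. g j a) ` I)" and "bounded ((\<lambda>j. g j b) ` I)"
  shows "\<bar>g i a - g i b\<bar> \<le> (SUP j\<in>I. \<bar>g j a - g j b\<bar>)"
proof -
  obtain A B where AB: "\<forall>j\<in>I. \<bar>g j a\<bar> \<le> A" "\<forall>j\<in>I. \<bar>g j b\<bar> \<le> B"
    using assms(2,3) unfolding bounded_iff by auto
  have "bdd_above ((\<lambda>j. \<bar>g j a - g j b\<bar>) ` I)"
  proof (rule bdd_aboveI2)
    fix j assume "j \<in> I"
    with AB have "\<bar>g j a\<bar> \<le> A" "\<bar>g j b\<bar> \<le> B"
      by blast+
    then show "\<bar>g j a - g j b\<bar> \<le> A + B"
      by linarith
  qed
  then show ?thesis
    by (rule cSUP_upper[OF assms(1)])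
qed

lemma Pseudometric_space_SUP_abs_diff:
  fixes g :: "'i \<Rightarrow> 'a \<Rightarrow> real"
  assumes "I \<noteq> {}" and "\<forall>a\<in>S. bounded ((\<lambda>i. g i a) ` I)"
  shows "Pseudometric_space S (\<lambda>a b. SUP i\<in>I. \<bar>g i a - g i b\<bar>)"
proof
  fix a b c assume abc: "a \<in> S" "b \<in> S" "c \<in> S"
  show "(SUP i\<in>I. \<bar>g i a - g i c\<bar>) \<le> (SUP i\<in>I. \<bar>g i a - g i b\<bar>) + (SUP i\<in>I. \<bar>g i b - g i c\<bar>)"
  proof (rule cSUP_least[OF assms(1)])
    fix i assume "i \<in> I"
    then have "\<bar>g i a - g i b\<bar> \<le> (SUP j\<in>I. \<bar>g j a - g j b\<bar>)"
      "\<bar>g i b - g i c\<bar> \<le> (SUP j\<in>I. \<bar>g j b - g j c\<bar>)"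
      using abc assms(2) by (auto intro: abs_diff_le_SUP_abs_diff)
    then show "\<bar>g i a - g i c\<bar> \<le> (SUP j\<in>I. \<bar>g j a - g j b\<bar>) + (SUP j\<in>I. \<bar>g j b - g j c\<bar>)"
      by linarith
  qed
qed (use assms(1) in \<open>simp_all add: abs_minus_commute\<close>)

lemma Pseudometric_space_DPhi:
  assumes "X \<noteq> {}" and "\<forall>\<phi>\<in>\<Phi>. bounded (\<phi> ` X)"
  shows "Pseudometric_space \<Phi> (DPhi X)"
  using Pseudometric_space_SUP_abs_diff[of X \<Phi> "\<lambda>x \<phi>. \<phi> x"] assms
  unfolding DPhi_def[abs_def] by simp

lemma Pseudometric_space_DX:
  assumes "\<Phi> \<noteq> {}" and "\<forall>x\<in>X. bounded ((\<lambda>\<phi>. \<phi> x) ` \<Phi>)"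
  shows "Pseudometric_space X (DX \<Phi>)"
  using Pseudometric_space_SUP_abs_diff[of \<Phi> X "\<lambda>\<phi> x. \<phi> x"] assms
  unfolding DX_def[abs_def] by simp

lemma abs_diff_le_DPhi:
  assumes "bounded (\<phi> ` X)" and "bounded (\<psi> ` X)" and "x \<in> X"
  shows "\<bar>\<phi> x - \<psi> x\<bar> \<le> DPhi X \<phi> \<psi>"
  using abs_diff_le_SUP_abs_diff[of x X "\<lambda>x \<phi>. \<phi> x" \<phi> \<psi>] assms
  unfolding DPhi_def by simp

lemma bounded_UN_if_pm_totally_bounded_DPhi:
  assumes "pm_totally_bounded \<Phi> (DPhi X)" and "\<forall>\<phi>\<in>\<Phi>. bounded (\<phi> ` X)"
  shows "bounded (\<Union>\<phi>\<in>\<Phi>. \<phi> ` X)"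
proof -
  obtain K where K: "finite K" "K \<subseteq> \<Phi>" "\<forall>\<phi>\<in>\<Phi>. \<exists>k\<in>K. DPhi X k \<phi> < 1"
    using assms(1) zero_less_one by (rule pm_totally_boundedE)
  have "bounded (\<Union>k\<in>K. k ` X)"
    using K(1,2) assms(2) by (intro bounded_UN) auto
  then obtain a where a: "\<forall>k\<in>K. \<forall>x\<in>X. \<bar>k x\<bar> \<le> a"
    unfolding bounded_iff by auto
  have "\<bar>\<phi> x\<bar> \<le> a + 1" if "\<phi> \<in> \<Phi>" "x \<in> X" for \<phi> x
  proof -
    obtain k where k: "k \<in> K" "DPhi X k \<phi> < 1"
      using K(3) \<open>\<phi> \<in> \<Phi>\<close> by blast
    then have "\<bar>k x - \<phi> x\<bar> \<le> DPhi X k \<phi>"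
      using K(2) assms(2) that by (intro abs_diff_le_DPhi) auto
    with a k that show ?thesis
      by fastforce
  qed
  then show ?thesis
    unfolding bounded_iff by (intro exI[of _ "a + 1"]) auto
qed

lemma finite_net_for_finite_family:
  fixes K :: "('a \<Rightarrow> real) set"
  assumes "finite K" and "\<forall>k\<in>K. bounded (k ` X)" and "e > 0"
  obtains P where "finite P" "P \<subseteq> X" "\<forall>x\<in>X. \<exists>p\<in>P. \<forall>k\<in>K. \<bar>k x - k p\<bar> < e"
proof -
  have "bounded (\<Union>k\<in>K. k ` X)"
    using assms(1,2) by (intro bounded_UN) auto
  then obtain B where B: "\<forall>k\<in>K. \<forall>x\<in>X. \<bar>k x\<bar> \<le> B"
    unfolding bounded_iff by auto
  define g where "g x = restrict (\<lambda>k. \<lfloor>k x / e\<rfloor>) K" for x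
  have "g ` X \<subseteq> PiE K (\<lambda>_. {\<lfloor>-B / e\<rfloor>..\<lfloor>B / e\<rfloor>})"
  proof
    fix v assume "v \<in> g ` X"
    then obtain x where x: "x \<in> X" "v = g x"
      by blast
    have "\<lfloor>k x / e\<rfloor> \<in> {\<lfloor>-B / e\<rfloor>..\<lfloor>B / e\<rfloor>}" if "k \<in> K" for k
    proof -
      have "-B \<le> k x" "k x \<le> B"
        using B that x(1) by fastforce+
      then have "-B / e \<le> k x / e" "k x / e \<le> B / e"
        using divide_right_mono[OF _ less_imp_le[OF assms(3)]] by blast+
      then show ?thesis
        by (simp add: floor_mono)
    qed
    with x show "v \<in> PiE K (\<lambda>_. {\<lfloor>-B / e\<rfloor>..\<lfloor>B / e\<rfloor>})"
      unfolding g_def by auto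
  qed
  moreover have "finite (PiE K (\<lambda>_. {\<lfloor>-B / e\<rfloor>..\<lfloor>B / e\<rfloor>}))"
    using assms(1) by (simp add: finite_PiE)
  ultimately have "finite (g ` X)"
    by (rule finite_subset)
  show thesis
  proof (rule that)
    show "finite (inv_into X g ` g ` X)"
      using \<open>finite (g ` X)\<close> by blast
    show "inv_into X g ` g ` X \<subseteq> X"
      by (auto intro: inv_into_into)
    show "\<forall>x\<in>X. \<exists>p\<in>inv_into X g ` g ` X. \<forall>k\<in>K. \<bar>k x - k p\<bar> < e"
    proof
      fix x assume x: "x \<in> X"
      define p where "p = inv_into X g (g x)"
      have "g p = g x"
        unfolding p_def using x by (intro f_inv_into_f) blast
      have "\<bar>k x - k p\<bar> < e" if "k \<in> K" for k
      proof -
        have "\<lfloor>k x / e\<rfloor> = \<lfloor>k p / e\<rfloor>"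
          using \<open>g p = g x\<close> that unfolding g_def by (metis restrict_apply')
        then have "\<bar>k x / e - k p / e\<bar> < 1"
          by (rule floor_eq_imp_diff_1)
        then have "\<bar>(k x - k p) / e\<bar> < 1"
          by (simp add: diff_divide_distrib)
        then show ?thesis
          using assms(3) by (simp add: abs_divide)
      qed
      moreover have "p \<in> inv_into X g ` g ` X"
        unfolding p_def using x by blast
      ultimately show "\<exists>p\<in>inv_into X g ` g ` X. \<forall>k\<in>K. \<bar>k x - k p\<bar> < e"
        by blast
    qed
  qed
qed

lemma pm_totally_bounded_DX:
  assumes "\<Phi> \<noteq> {}" and "\<forall>\<phi>\<in>\<Phi>. bounded (\<phi> ` X)" and "pm_totally_bounded \<Phi> (DPhi X)"
  shows "pm_totally_bounded X (DX \<Phi>)"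
  unfolding pm_totally_bounded_def
proof (intro allI impI)
  fix e :: real assume "e > 0"
  then have "e / 4 > 0"
    by simp
  with assms(3) obtain K where K: "finite K" "K \<subseteq> \<Phi>" "\<forall>\<phi>\<in>\<Phi>. \<exists>k\<in>K. DPhi X k \<phi> < e / 4"
    by (rule pm_totally_boundedE)
  moreover have "\<forall>k\<in>K. bounded (k ` X)"
    using K(2) assms(2) by blast
  ultimately obtain P where P: "finite P" "P \<subseteq> X" "\<forall>x\<in>X. \<exists>p\<in>P. \<forall>k\<in>K. \<bar>k x - k p\<bar> < e / 4"
    using \<open>e / 4 > 0\<close> by (metis finite_net_for_finite_family)
  have "\<exists>p\<in>P. DX \<Phi> p x < e" if "x \<in> X" for x
  proof -
    obtain p where p: "p \<in> P" "\<forall>k\<in>K. \<bar>k x - k p\<bar> < e / 4"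
      using P(3) \<open>x \<in> X\<close> by blast
    have "DX \<Phi> p x \<le> 3 * (e / 4)"
      unfolding DX_def
    proof (rule cSUP_least[OF assms(1)])
      fix \<phi> assume "\<phi> \<in> \<Phi>"
      then obtain k where k: "k \<in> K" "DPhi X k \<phi> < e / 4"
        using K(3) by blast
      have "\<bar>k x - \<phi> x\<bar> \<le> DPhi X k \<phi>" "\<bar>k p - \<phi> p\<bar> \<le> DPhi X k \<phi>"
        using k(1) K(2) assms(2) \<open>\<phi> \<in> \<Phi>\<close> \<open>x \<in> X\<close> p(1) P(2)
        by (auto intro!: abs_diff_le_DPhi)
      moreover have "\<bar>k x - k p\<bar> < e / 4"
        using p(2) k(1) by blast
      \<comment> \<open>\<open>\<phi> p \<approx> k p \<approx> k x \<approx> \<phi> x\<close>, each step within \<open>e/4\<close>\<close>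
      ultimately show "\<bar>\<phi> p - \<phi> x\<bar> \<le> 3 * (e / 4)"
        using k(2) by linarith
    qed
    with p(1) \<open>e > 0\<close> show ?thesis
      by force
  qed
  with P(1,2) show "\<exists>K. finite K \<and> K \<subseteq> X \<and> (\<forall>y\<in>X. \<exists>k\<in>K. DX \<Phi> k y < e)"
    by blast
qed

theorem mainTheorem3:
  fixes X :: "'a set" and \<Phi> :: "('a \<Rightarrow> real) set"
  assumes "X \<noteq> {}"
    and "\<Phi> \<noteq> {}"
    and "\<forall>\<phi>\<in>\<Phi>. bounded (\<phi> ` X)"
    and "compact_space (pm_topology \<Phi> (DPhi X))"
    and "pm_complete X (DX \<Phi>)"
  shows "compact_space (pm_topology X (DX \<Phi>))"
proof -
  interpret \<Phi>_space: Pseudometric_space \<Phi> "DPhi X"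
    using assms(1,3) by (rule Pseudometric_space_DPhi)
  have totally_bounded: "pm_totally_bounded \<Phi> (DPhi X)"
    using assms(4) by (rule \<Phi>_space.pm_totally_bounded_if_compact_space)
  then have uniformly_bounded: "bounded (\<Union>\<phi>\<in>\<Phi>. \<phi> ` X)"
    using assms(3) by (rule bounded_UN_if_pm_totally_bounded_DPhi)
  have "\<forall>x\<in>X. bounded ((\<lambda>\<phi>. \<phi> x) ` \<Phi>)"
  proof
    fix x assume "x \<in> X"
    show "bounded ((\<lambda>\<phi>. \<phi> x) ` \<Phi>)"
      by (rule bounded_subset[OF uniformly_bounded]) (use \<open>x \<in> X\<close> in blast)
  qed
  with assms(2) interpret X_space: Pseudometric_space X "DX \<Phi>"
    by (rule Pseudometric_space_DX)
  show ?thesis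
    using assms(5) pm_totally_bounded_DX[OF assms(2,3) totally_bounded]
    by (rule X_space.compact_space_if_complete_totally_bounded)
qed

end
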